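(* Let $A$ be a real $n\times n$ matrix with strictly negative diagonal entries and clique complex $X(G_A)$. Suppose $\det A_\sigma=0$ for every clique $\sigma\in X(G_A)$ with $|\sigma|=2$ or $|\sigma|=3$. Then the sign matrix $\mathcal{E}_A$ is symmetric, and $A_{ii}A_{jj}=A_{ij}A_{ji}$ for every clique $\{i,j\}\in X(G_A)$ with $i\ne j$, and $A_{ii}A_{jj}A_{kk}=A_{ij}A_{jk}A_{ki}$ for every clique $\{i,j,k\}\in X(G_A)$ with $i,j,k$ distinct. (In particular $A_{ij}\neq0$ for every edge $(ij)$ of $G_A$.)
   Context: The sign matrix $\mathcal{E}_A$ has entries equal to the signs ($1,-1,0$) of the entries of $A$. The connectivity graph $G_A$ is the simple graph on $\{1,\dots,n\}$ containing edge $(ij)$, $i\ne j$, unless $A_{ij}=A_{ji}=0$; $X(G_A)$ is the set of its cliques (sets of pairwise adjacent vertices). $A_\sigma$ denotes the principal submatrix of $A$ on index set $\sigma$. *)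

theory Defs
  imports "HOL-Analysis.Analysis"
begin

definition sign_matrix :: "real^'n^'n \<Rightarrow> real^'n^'n" where
  "sign_matrix A = (\<chi> i j. sgn (A $ i $ j))"

definition conn_edge :: "real^'n^'n \<Rightarrow> 'n \<Rightarrow> 'n \<Rightarrow> bool" where
  "conn_edge A i j \<longleftrightarrow> i \<noteq> j \<and> \<not> (A $ i $ j = 0 \<and> A $ j $ i = 0)"

definition cliques :: "real^'n^'n \<Rightarrow> 'n set set" where
  "cliques A = {\<sigma>. \<forall>i\<in>\<sigma>. \<forall>j\<in>\<sigma>. i \<noteq> j \<longrightarrow> conn_edge A i j}"

definition principal_det :: "real^'n^'n \<Rightarrow> 'n set \<Rightarrow> real" where
  "principal_det A \<sigma> =
     (\<Sum>p\<in>{p. p permutes \<sigma>}. of_int (sign p) * (\<Prod>i\<in>\<sigma>. A $ i $ p i))"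

end

theory Submission
  imports Defs
begin

(* For an edge (ij) of G_A the pair {i,j} is a clique, so the vanishing
   2x2 principal minor gives A_ii A_jj = A_ij A_ji.  The left side is positive
   (both diagonal entries are negative), hence A_ij and A_ji are nonzero and of the
   same sign, which makes the sign matrix symmetric.  For a triangle {i,j,k} put
   m = A_ii A_jj A_kk, P = A_ij A_jk A_ki and Q = A_ik A_kj A_ji.  Using the three
   edge identities, the vanishing 3x3 principal minor becomes P + Q = 2m, while
   multiplying the edge identities gives P Q = m^2; so (P - m)^2 = 0 and P = m. *)

lemma principal_det_pair:
  assumes "i \<noteq> j"
  shows "principal_det A {i, j} = A$i$i * A$j$j - A$i$j * A$j$i"
proof -
  have f: "finite {j}" "i \<notin> {j}" using assms by auto
  show ?thesis
    unfolding principal_det_def sum_over_permutations_insert[OF f] permutes_sing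
    using assms by (simp add: sign_swap_id sign_id swap_id_eq)
qed

lemma principal_det_triple:
  assumes "i \<noteq> j" "j \<noteq> k" "i \<noteq> k"
  shows "principal_det A {i, j, k} =
    A$i$i * A$j$j * A$k$k + A$i$j * A$j$k * A$k$i + A$i$k * A$j$i * A$k$j
    - A$i$i * A$j$k * A$k$j - A$i$j * A$j$i * A$k$k - A$i$k * A$j$j * A$k$i"
proof -
  have f1: "finite {j, k}" "i \<notin> {j, k}" using assms by auto
  have f2: "finite {k}" "j \<notin> {k}" using assms by auto
  show ?thesis
    unfolding principal_det_def sum_over_permutations_insert[OF f1]
      sum_over_permutations_insert[OF f2] permutes_sing
    using assms
    by (simp add: sign_swap_id permutation_swap_id sign_compose sign_id swap_id_eq
        algebra_simps)
qed

lemma eq_of_sum_and_product: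
  fixes P Q m :: real
  assumes sum: "P + Q = 2 * m" and prod: "P * Q = m\<^sup>2"
  shows "P = m"
proof -
  have "(P - m)\<^sup>2 = P * P - (P + Q) * P + P * Q"
    using sum prod by (simp add: power2_eq_square algebra_simps)
  also have "\<dots> = 0" by (simp add: algebra_simps)
  finally show ?thesis by simp
qed

lemma edge_clique:
  assumes "conn_edge A i j"
  shows "{i, j} \<in> cliques A" "card {i, j} = 2"
  using assms by (auto simp: cliques_def conn_edge_def)

lemma edge_product:
  assumes dets: "\<And>\<sigma>. \<sigma> \<in> cliques A \<Longrightarrow> card \<sigma> = 2 \<or> card \<sigma> = 3 \<Longrightarrow>
                 principal_det A \<sigma> = 0"
    and e: "conn_edge A i j"
  shows "A$i$i * A$j$j = A$i$j * A$j$i"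
proof -
  have "i \<noteq> j" using e by (simp add: conn_edge_def)
  moreover have "principal_det A {i, j} = 0" using dets edge_clique[OF e] by blast
  ultimately show ?thesis using principal_det_pair[of i j A] by simp
qed

lemma edge_product_pos:
  assumes diag: "\<And>i. A $ i $ i < (0::real)"
    and dets: "\<And>\<sigma>. \<sigma> \<in> cliques A \<Longrightarrow> card \<sigma> = 2 \<or> card \<sigma> = 3 \<Longrightarrow>
                 principal_det A \<sigma> = 0"
    and e: "conn_edge A i j"
  shows "A$i$j * A$j$i > 0"
  using edge_product[OF dets e] mult_neg_neg[OF diag[of i] diag[of j]] by simp

lemma sign_matrix_symmetric:
  fixes A :: "real^'n^'n"
  assumes edge_pos: "\<And>i j. conn_edge A i j \<Longrightarrow> A$i$j * A$j$i > 0"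
  shows "transpose (sign_matrix A) = sign_matrix A"
proof -
  have "sgn (A$j$i) = sgn (A$i$j)" for i j
  proof (cases "conn_edge A i j")
    case True
    then show ?thesis using edge_pos[OF True] by (auto simp: zero_less_mult_iff sgn_if)
  next
    case False
    then show ?thesis by (cases "i = j") (auto simp: conn_edge_def)
  qed
  then show ?thesis by (simp add: transpose_def sign_matrix_def vec_eq_iff)
qed

lemma triangle_product:
  assumes dets: "\<And>\<sigma>. \<sigma> \<in> cliques A \<Longrightarrow> card \<sigma> = 2 \<or> card \<sigma> = 3 \<Longrightarrow>
                 principal_det A \<sigma> = 0"
    and clique: "{i, j, k} \<in> cliques A" and d: "i \<noteq> j" "j \<noteq> k" "i \<noteq> k"
  shows "A$i$i * A$j$j * A$k$k = A$i$j * A$j$k * A$k$i"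
proof -
  have "conn_edge A i j" "conn_edge A j k" "conn_edge A k i"
    using clique d by (auto simp: cliques_def)
  then have edges: "A$i$i * A$j$j = A$i$j * A$j$i" "A$j$j * A$k$k = A$j$k * A$k$j"
      "A$k$k * A$i$i = A$k$i * A$i$k"
    using edge_product[of A, OF dets] by blast+
  define P Q where "P = A$i$j * A$j$k * A$k$i" and "Q = A$i$k * A$j$i * A$k$j"
  define m where "m = A$i$i * A$j$j * A$k$k"
  \<comment> \<open>the three terms of the minor containing a diagonal entry and a 2-cycle\<close>
  have mixed: "A$i$i * A$j$k * A$k$j = m" "A$i$j * A$j$i * A$k$k = m"
      "A$i$k * A$j$j * A$k$i = m"
  proof -
    show "A$i$i * A$j$k * A$k$j = m"
      unfolding m_def by (simp only: mult.assoc edges(2)[symmetric])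
    show "A$i$j * A$j$i * A$k$k = m"
      unfolding m_def by (simp only: edges(1)[symmetric])
    have "A$i$k * A$j$j * A$k$i = A$j$j * (A$k$i * A$i$k)" by (simp only: ac_simps)
    then show "A$i$k * A$j$j * A$k$i = m"
      unfolding m_def edges(3)[symmetric] by (simp only: ac_simps)
  qed
  have "card {i, j, k} = 3" using d by simp
  then have "0 = principal_det A {i, j, k}" using dets clique by simp
  also have "\<dots> = m + P + Q - m - m - m"
    unfolding principal_det_triple[OF d] mixed P_def Q_def m_def ..
  finally have "P + Q = 2 * m" by simp
  moreover have "P * Q = m\<^sup>2"
  proof -
    have "P * Q = (A$i$j * A$j$i) * (A$j$k * A$k$j) * (A$k$i * A$i$k)"
      unfolding P_def Q_def by (simp only: ac_simps)
    also have "\<dots> = (A$i$i * A$j$j) * (A$j$j * A$k$k) * (A$k$k * A$i$i)"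
      by (simp only: edges)
    also have "\<dots> = m\<^sup>2"
      unfolding m_def by (simp add: power2_eq_square algebra_simps)
    finally show ?thesis .
  qed
  ultimately have "P = m" by (rule eq_of_sum_and_product)
  then show ?thesis unfolding P_def m_def by simp
qed

theorem mainTheorem9:
  fixes A :: "real^'n^'n"
  assumes diag: "\<And>i. A $ i $ i < 0"
    and dets: "\<And>\<sigma>. \<sigma> \<in> cliques A \<Longrightarrow> card \<sigma> = 2 \<or> card \<sigma> = 3 \<Longrightarrow>
                 principal_det A \<sigma> = 0"
  shows "transpose (sign_matrix A) = sign_matrix A
    \<and> (\<forall>i j. {i, j} \<in> cliques A \<and> i \<noteq> j \<longrightarrow>
            A $ i $ i * A $ j $ j = A $ i $ j * A $ j $ i)
    \<and> (\<forall>i j k. {i, j, k} \<in> cliques A \<and> i \<noteq> j \<and> j \<noteq> k \<and> i \<noteq> k \<longrightarrow>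
            A $ i $ i * A $ j $ j * A $ k $ k = A $ i $ j * A $ j $ k * A $ k $ i)
    \<and> (\<forall>i j. conn_edge A i j \<longrightarrow> A $ i $ j \<noteq> 0)"
proof -
  have edge_pos: "\<And>i j. conn_edge A i j \<Longrightarrow> A$i$j * A$j$i > 0"
    using edge_product_pos[of A, OF diag dets] by blast
  have "\<forall>i j. {i, j} \<in> cliques A \<and> i \<noteq> j \<longrightarrow> A$i$i * A$j$j = A$i$j * A$j$i"
    using edge_product[of A, OF dets] by (auto simp: cliques_def)
  moreover have "\<forall>i j. conn_edge A i j \<longrightarrow> A $ i $ j \<noteq> 0"
    using edge_pos by fastforce
  ultimately show ?thesis
    using sign_matrix_symmetric[OF edge_pos] triangle_product[of A, OF dets] by blast
qed

end
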